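(* Let $n\ge1$, $0<T\le\infty$, $a\in\mathbb{R}$, and let $0\le u_0\in C(\mathbb{R}^n)$ with $u_0\not\equiv0$. If $0\le\mu\in\mathcal{Z}_{T,a}$ satisfies $$\mu(x,t)\ge u_0(x)+\int_0^t\mathcal{B}\mu(x,\tau)\,d\tau\qquad\text{on }Q_T,$$ then for every $\delta>1$ and $0<t_0<T$ there is a constant $C_0=C_0(\delta,t_0,u_0)>0$ such that $$\int_0^{t_0}\mathcal{B}\mu(x,\tau)\,d\tau\ge C_0e^{-\delta|x|}\qquad(x\in\mathbb{R}^n).$$ In particular, if $0<p<1$, $V\ge0$ is continuous, $u$ is an s-supersolution of $\partial_tu-\Delta\partial_tu=\Delta u+Vu^p$, $u(\cdot,0)=u_0$, on $Q_T$ and $\mu=e^tu$, then $$\mu(x,t_0)\ge u_0(x)+\int_0^{t_0}\mathcal{B}\mu\,d\tau+\int_0^{t_0}e^{(1-p)\tau}\mathcal{B}[V\mu^p]\,d\tau\ge C_0e^{-\delta|x|}\qquad(x\in\mathbb{R}^n).$$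
   Context: $\mathcal{B}\varphi=B*\varphi$, $B=\mathcal{F}^{-1}((1+|\xi|^2)^{-1})$. $BC_a$: continuous functions with $|\varphi(x)|\le C|x|^a$ for large $|x|$; $\mathcal{Z}_{T,a}=C([0,T);BC_a)$, $Q_T=\mathbb{R}^n\times[0,T)$. $u$ is an s-supersolution on $Q_T$ if $\mu=e^tu\in\mathcal{Z}_{T,a}$ and $\mu(t)\ge u_0+\int_0^t\mathcal{B}\mu\,d\tau+\int_0^te^{(1-p)\tau}\mathcal{B}[V\mu^p]\,d\tau$ on $Q_T$. *)

theory Defs
  imports "HOL-Analysis.Analysis"
begin

text \<open>Bessel kernel B = inverse Fourier transform of (1+|xi|^2)^(-1) on R^n,
  written via the subordination formula (1+|xi|^2)^(-1) = int_0^oo e^(-s) e^(-s|xi|^2) ds,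
  i.e. B(x) = int_0^oo e^(-s) (4 pi s)^(-n/2) e^(-|x|^2/(4s)) ds.\<close>
definition Bker :: "real^'n \<Rightarrow> real" where
  "Bker x = (LINT s:{0<..}|lborel.
      exp (- s) * (4 * pi * s) powr (- real CARD('n) / 2) * exp (- (norm x)\<^sup>2 / (4 * s)))"

definition Bop :: "(real^'n \<Rightarrow> real) \<Rightarrow> real^'n \<Rightarrow> real" where
  "Bop \<phi> x = (LINT y|lborel. Bker (x - y) * \<phi> y)"

definition BC :: "real \<Rightarrow> (real^'n \<Rightarrow> real) set" where
  "BC a = {\<phi>. continuous_on UNIV \<phi> \<and>
     (\<exists>C R. \<forall>x. R \<le> norm x \<longrightarrow> \<bar>\<phi> x\<bar> \<le> C * norm x powr a)}"

definition Tset :: "ereal \<Rightarrow> real set" where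
  "Tset T = {t. 0 \<le> t \<and> ereal t < T}"

text \<open>Z_{T,a} = C([0,T); BC_a), continuity in time with respect to the weighted
  sup norm  sup_x |phi(x)| / (1+|x|)^a  of BC_a.\<close>
definition Z :: "ereal \<Rightarrow> real \<Rightarrow> (real^'n \<Rightarrow> real \<Rightarrow> real) set" where
  "Z T a = {\<mu>. (\<forall>t\<in>Tset T. (\<lambda>x. \<mu> x t) \<in> BC a) \<and>
     (\<forall>t\<in>Tset T. \<forall>\<epsilon>>0. \<exists>d>0. \<forall>s\<in>Tset T. \<bar>s - t\<bar> < d \<longrightarrow>
        (\<forall>x. \<bar>\<mu> x s - \<mu> x t\<bar> \<le> \<epsilon> * (1 + norm x) powr a))}"

text \<open>u is an s-supersolution of u_t - Delta u_t = Delta u + V u^p, u(.,0)=u0 on Q_T.\<close>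
definition s_supersol ::
  "real \<Rightarrow> (real^'n \<Rightarrow> real) \<Rightarrow> (real^'n \<Rightarrow> real) \<Rightarrow> ereal \<Rightarrow> real
     \<Rightarrow> (real^'n \<Rightarrow> real \<Rightarrow> real) \<Rightarrow> bool" where
  "s_supersol p V u0 T a u \<longleftrightarrow>
     (\<lambda>x t. exp t * u x t) \<in> Z T a \<and>
     (\<forall>x. \<forall>t\<in>Tset T.
        exp t * u x t \<ge> u0 x
          + (LINT \<tau>:{0..t}|lborel. Bop (\<lambda>y. exp \<tau> * u y \<tau>) x)
          + (LINT \<tau>:{0..t}|lborel. exp ((1 - p) * \<tau>) *
               Bop (\<lambda>y. V y * (exp \<tau> * u y \<tau>) powr p) x))"

end

(*
  The kernel B is positive and, for every delta > 1, bounded below by kappa e^(-delta |z|):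
  in its subordination integral over s > 0 the window s ~ |z|/2 already contributes that much.
  Since the B-term of the inequality is nonnegative, mu(., tau) >= u0 >= eta/2 on a small ball
  around a point where u0 does not vanish, so B mu(., tau)(x) >= c e^(-delta |x|) uniformly in
  tau; integrating over [0, t0] gives C0 = t0 c. For an s-supersolution the source term is
  nonnegative as well, so mu = e^t u satisfies the same linear inequality.
  All Lebesgue integrals involved are genuine (an improper LINT would be 0) because B(x - .)
  integrates every polynomial weight, by Tonelli and Gaussian moment bounds.
*)
theory Submission
  imports Defs "HOL-Probability.Distributions"
begin

lemma powr_le_const_mult_exp:
  fixes b e :: real
  assumes "0 \<le> b" "0 < e"
  obtains C where "0 < C" "\<And>y. 0 \<le> y \<Longrightarrow> y powr b \<le> C * exp (e * y)"
proof (cases "b = 0")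
  case True
  then show ?thesis using assms by (intro that[of 1]) auto
next
  case False
  with assms have b: "0 < b" by simp
  show ?thesis
  proof (rule that[of "(b / e) powr b"])
    show "0 < (b / e) powr b" using b assms by simp
    fix y :: real assume y: "0 \<le> y"
    have "e * y / b \<le> exp (e * y / b)" using exp_ge_add_one_self[of "e * y / b"] by linarith
    then have "y \<le> (b / e) * exp (e * y / b)" using b assms by (simp add: field_simps)
    then have "y powr b \<le> ((b / e) * exp (e * y / b)) powr b" using y b by (intro powr_mono2) auto
    also have "\<dots> = (b / e) powr b * exp (e * y / b) powr b"
      by (rule powr_mult)
    also have "exp (e * y / b) powr b = exp (e * y)"
      using b by (simp add: exp_powr_real)
    finally show "y powr b \<le> (b / e) powr b * exp (e * y)" .
  qed
qed

lemma one_plus_sum_le_prod: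
  fixes a :: "'a \<Rightarrow> real"
  assumes "\<And>i. i \<in> A \<Longrightarrow> 0 \<le> a i"
  shows "1 + sum a A \<le> (\<Prod>i\<in>A. 1 + a i)"
  using assms
proof (induction A rule: infinite_finite_induct)
  case (insert x F)
  then have "0 \<le> a x" "0 \<le> sum a F" by (auto intro: sum_nonneg)
  then have "1 + sum a (insert x F) \<le> (1 + a x) * (1 + sum a F)"
    using insert.hyps by (simp add: algebra_simps)
  also have "\<dots> \<le> (\<Prod>i\<in>insert x F. 1 + a i)"
    using insert by (auto intro: mult_left_mono)
  finally show ?case .
qed simp_all

lemma heat_kernel_scaling:
  fixes s :: real
  assumes s: "0 < s"
  shows "(4 * pi * s) powr (- real D / 2) * (2 * sqrt s) ^ D = pi powr (- real D / 2)"
proof -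
  have "2 * sqrt s = (4 * s) powr (1 / 2)"
    using s by (simp add: powr_half_sqrt real_sqrt_mult)
  then have "(2 * sqrt s) ^ D = (4 * s) powr (real D / 2)"
    using s by (simp add: powr_realpow[symmetric] powr_powr)
  moreover have "(4 * pi * s) powr (- real D / 2) = pi powr (- real D / 2) * (4 * s) powr (- real D / 2)"
    by (simp add: powr_mult[symmetric] mult.commute mult.left_commute)
  moreover have "(4 * s) powr (- real D / 2) * (4 * s) powr (real D / 2) = 1"
    using s by (simp add: powr_add[symmetric])
  ultimately show ?thesis by (simp add: mult.assoc)
qed

lemma nn_integral_exp_neg_Ici: "(\<integral>\<^sup>+x. ennreal (exp (- x)) * indicator {0..} x \<partial>lborel) = 1"
  using nn_intergal_power_times_exp_Ici[of 0] by simp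

lemma nn_integral_exp_neg_abs: "(\<integral>\<^sup>+x. ennreal (exp (- \<bar>x\<bar>)) \<partial>lborel) = 2"
proof -
  let ?f = "\<lambda>x::real. ennreal (exp (- x)) * indicator {0..} x"
  have "(\<integral>\<^sup>+x. ennreal (exp (- \<bar>x\<bar>)) \<partial>lborel) = (\<integral>\<^sup>+x. ?f x + ?f (- x) \<partial>lborel)"
    by (intro nn_integral_cong_AE AE_I[where N = "{0}"]) (auto simp: indicator_def)
  also have "\<dots> = (\<integral>\<^sup>+x. ?f x \<partial>lborel) + (\<integral>\<^sup>+x. ?f (- x) \<partial>lborel)"
    by (intro nn_integral_add) auto
  also have "(\<integral>\<^sup>+x. ?f (- x) \<partial>lborel) = (\<integral>\<^sup>+x. ?f x \<partial>lborel)"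
    using nn_integral_real_affine[of ?f "-1" 0] by simp
  finally show ?thesis using nn_integral_exp_neg_Ici by simp
qed

lemma nn_integral_exp_neg_half: "(\<integral>\<^sup>+s. ennreal (exp (- s / 2)) * indicator {0..} s \<partial>lborel) = 2"
proof -
  let ?f = "\<lambda>s::real. ennreal (exp (- s / 2)) * indicator {0..} s"
  have "(\<integral>\<^sup>+s. ?f s \<partial>lborel) = 2 * (\<integral>\<^sup>+s. ?f (0 + 2 * s) \<partial>lborel)"
    using nn_integral_real_affine[of ?f 2 0] by simp
  also have "(\<lambda>s. ?f (0 + 2 * s)) = (\<lambda>s. ennreal (exp (- s)) * indicator {0..} s)"
    by (auto simp: indicator_def fun_eq_iff)
  finally show ?thesis using nn_integral_exp_neg_Ici by simp
qed

lemma nn_integral_exp_neg_mult_powr_finite: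
  fixes c :: real
  assumes "0 \<le> c"
  shows "(\<integral>\<^sup>+s. ennreal (exp (- s) * (2 + s) powr c) * indicator {0..} s \<partial>lborel) < \<infinity>"
proof -
  obtain C where C: "0 < C" "\<And>y. 0 \<le> y \<Longrightarrow> y powr c \<le> C * exp (1 / 2 * y)"
    using powr_le_const_mult_exp[OF assms, of "1 / 2"] by auto
  have "exp (- s) * (2 + s) powr c \<le> C * exp 1 * exp (- s / 2)" if "0 \<le> s" for s :: real
  proof -
    have "exp (- s) * (2 + s) powr c \<le> exp (- s) * (C * exp (1 / 2 * (2 + s)))"
      using C(2)[of "2 + s"] that by (intro mult_left_mono) auto
    also have "\<dots> = C * exp 1 * exp (- s / 2)"
      by (simp add: mult_exp_exp field_simps)
    finally show ?thesis .
  qed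
  then have "(\<integral>\<^sup>+s. ennreal (exp (- s) * (2 + s) powr c) * indicator {0..} s \<partial>lborel)
      \<le> (\<integral>\<^sup>+s. ennreal (C * exp 1) * (ennreal (exp (- s / 2)) * indicator {0..} s) \<partial>lborel)"
    using C(1) by (intro nn_integral_mono) (auto simp: indicator_def ennreal_mult[symmetric] ennreal_leI)
  also have "\<dots> = ennreal (C * exp 1) * 2"
    using nn_integral_exp_neg_half by (simp add: nn_integral_cmult)
  also have "\<dots> < \<infinity>"
    by (simp add: ennreal_mult_less_top)
  finally show ?thesis .
qed

lemma nn_integral_lborel_reflect:
  fixes f :: "'a::euclidean_space \<Rightarrow> ennreal"
  assumes [measurable]: "f \<in> borel_measurable borel"
  shows "(\<integral>\<^sup>+y. f (x - y) \<partial>lborel) = (\<integral>\<^sup>+z. f z \<partial>lborel)"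
  by (subst lborel_affine[of "-1" x])
     (simp_all add: nn_integral_density nn_integral_distr)

definition gauss_moment :: "real \<Rightarrow> ennreal" where
  "gauss_moment b = (\<integral>\<^sup>+v. ennreal (exp (- v\<^sup>2) * (1 + \<bar>v\<bar>) powr b) \<partial>lborel)"

lemma gauss_moment_finite:
  assumes "0 \<le> b"
  shows "gauss_moment b < \<infinity>"
proof -
  obtain C where C: "0 < C" "\<And>y. 0 \<le> y \<Longrightarrow> y powr b \<le> C * exp (1 * y)"
    using powr_le_const_mult_exp[OF assms, of 1] by auto
  have bound: "exp (- v\<^sup>2) * (1 + \<bar>v\<bar>) powr b \<le> C * exp 2 * exp (- \<bar>v\<bar>)" for v :: real
  proof -
    have "- v\<^sup>2 \<le> 1 - 2 * \<bar>v\<bar>"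
      using zero_le_power2[of "\<bar>v\<bar> - 1"] by (simp add: power2_diff)
    then have "exp (- v\<^sup>2) * (1 + \<bar>v\<bar>) powr b \<le> exp (1 - 2 * \<bar>v\<bar>) * (C * exp (1 + \<bar>v\<bar>))"
      using C(2)[of "1 + \<bar>v\<bar>"] by (intro mult_mono) auto
    also have "\<dots> = C * exp 2 * exp (- \<bar>v\<bar>)"
      by (simp add: mult_exp_exp)
    finally show ?thesis .
  qed
  have "gauss_moment b \<le> (\<integral>\<^sup>+v. ennreal (C * exp 2) * ennreal (exp (- \<bar>v\<bar>)) \<partial>lborel)"
    unfolding gauss_moment_def using bound C(1)
    by (intro nn_integral_mono) (simp add: ennreal_mult[symmetric])
  also have "\<dots> = ennreal (C * exp 2) * 2"
    by (simp add: nn_integral_cmult nn_integral_exp_neg_abs)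
  also have "\<dots> < \<infinity>"
    by (simp add: ennreal_mult_less_top)
  finally show ?thesis .
qed

lemma nn_integral_gauss_weight_le:
  fixes s b :: real
  assumes s: "0 < s" and b: "0 \<le> b"
  shows "(\<integral>\<^sup>+t. ennreal (exp (- t\<^sup>2 / (4 * s)) * (1 + \<bar>t\<bar>) powr b) \<partial>lborel)
     \<le> ennreal (2 * sqrt s * (1 + 2 * sqrt s) powr b) * gauss_moment b"
proof -
  define g where "g t = ennreal (exp (- t\<^sup>2 / (4 * s)) * (1 + \<bar>t\<bar>) powr b)" for t :: real
  have [measurable]: "g \<in> borel_measurable borel" unfolding g_def by measurable
  have "(\<integral>\<^sup>+t. g t \<partial>lborel) = ennreal (2 * sqrt s) * (\<integral>\<^sup>+v. g (0 + 2 * sqrt s * v) \<partial>lborel)"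
    using nn_integral_real_affine[of g "2 * sqrt s" 0] s by simp
  also have "(\<integral>\<^sup>+v. g (0 + 2 * sqrt s * v) \<partial>lborel)
      \<le> (\<integral>\<^sup>+v. ennreal ((1 + 2 * sqrt s) powr b) * ennreal (exp (- v\<^sup>2) * (1 + \<bar>v\<bar>) powr b) \<partial>lborel)"
  proof (intro nn_integral_mono)
    fix v :: real
    have "(1 + \<bar>2 * sqrt s * v\<bar>) powr b \<le> ((1 + 2 * sqrt s) * (1 + \<bar>v\<bar>)) powr b"
      using s b by (intro powr_mono2) (auto simp: abs_mult algebra_simps)
    moreover have "(2 * sqrt s * v)\<^sup>2 / (4 * s) = v\<^sup>2"
      using s by (simp add: power_mult_distrib)
    ultimately show "g (0 + 2 * sqrt s * v)
        \<le> ennreal ((1 + 2 * sqrt s) powr b) * ennreal (exp (- v\<^sup>2) * (1 + \<bar>v\<bar>) powr b)"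
      unfolding g_def by (simp add: ennreal_mult[symmetric] powr_mult ennreal_leI mult_left_mono)
  qed
  also have "\<dots> = ennreal ((1 + 2 * sqrt s) powr b) * gauss_moment b"
    unfolding gauss_moment_def by (intro nn_integral_cmult) auto
  finally show ?thesis
    unfolding g_def using s by (simp add: ennreal_mult mult.assoc mult_left_mono)
qed

lemma gauss_weight_le_prod:
  fixes z :: "'a::euclidean_space" and s b :: real
  assumes "0 \<le> b"
  shows "exp (- (norm z)\<^sup>2 / (4 * s)) * (1 + norm z) powr b
    \<le> (\<Prod>i\<in>Basis. exp (- (z \<bullet> i)\<^sup>2 / (4 * s)) * (1 + \<bar>z \<bullet> i\<bar>) powr b)"
proof -
  have "(norm z)\<^sup>2 = (\<Sum>i\<in>Basis. (z \<bullet> i)\<^sup>2)"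
    unfolding power2_norm_eq_inner euclidean_inner[of z z] by (simp add: power2_eq_square)
  then have "exp (- (norm z)\<^sup>2 / (4 * s)) = (\<Prod>i\<in>Basis. exp (- (z \<bullet> i)\<^sup>2 / (4 * s)))"
    by (simp add: exp_sum[symmetric] sum_divide_distrib sum_negf)
  moreover have "1 + norm z \<le> (\<Prod>i\<in>Basis. 1 + \<bar>z \<bullet> i\<bar>)"
    using norm_le_l1[of z] one_plus_sum_le_prod[of "Basis" "\<lambda>i. \<bar>z \<bullet> i\<bar>"] by simp
  then have "(1 + norm z) powr b \<le> (\<Prod>i\<in>Basis. (1 + \<bar>z \<bullet> i\<bar>) powr b)"
    using assms by (auto simp: prod_powr_distrib[symmetric] intro: powr_mono2)
  ultimately show ?thesis
    by (simp add: prod.distrib mult_left_mono prod_nonneg)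
qed

lemma nn_integral_gauss_weight_euclidean_le:
  fixes s b :: real
  assumes s: "0 < s" and b: "0 \<le> b"
  shows "(\<integral>\<^sup>+z. ennreal (exp (- (norm z)\<^sup>2 / (4 * s)) * (1 + norm z) powr b) \<partial>(lborel :: 'a::euclidean_space measure))
    \<le> (ennreal (2 * sqrt s * (1 + 2 * sqrt s) powr b) * gauss_moment b) ^ DIM('a)"
proof -
  define h where "h t = ennreal (exp (- t\<^sup>2 / (4 * s)) * (1 + \<bar>t\<bar>) powr b)" for t
  have [measurable]: "h \<in> borel_measurable borel" unfolding h_def by measurable
  have "(\<integral>\<^sup>+z. ennreal (exp (- (norm z)\<^sup>2 / (4 * s)) * (1 + norm z) powr b) \<partial>(lborel :: 'a measure))
      \<le> (\<integral>\<^sup>+z. (\<Prod>i\<in>Basis. h (z \<bullet> i)) \<partial>(lborel :: 'a measure))"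
  proof (intro nn_integral_mono)
    fix z :: 'a
    have "(\<Prod>i\<in>Basis. h (z \<bullet> i))
        = ennreal (\<Prod>i\<in>Basis. exp (- (z \<bullet> i)\<^sup>2 / (4 * s)) * (1 + \<bar>z \<bullet> i\<bar>) powr b)"
      unfolding h_def by (intro prod_ennreal) auto
    then show "ennreal (exp (- (norm z)\<^sup>2 / (4 * s)) * (1 + norm z) powr b) \<le> (\<Prod>i\<in>Basis. h (z \<bullet> i))"
      using gauss_weight_le_prod[OF b, of z s] by (simp add: ennreal_leI)
  qed
  also have "\<dots> = (\<Prod>i\<in>(Basis :: 'a set). \<integral>\<^sup>+t. h t \<partial>lborel)"
    by (intro nn_integral_lborel_prod) auto
  also have "\<dots> \<le> (ennreal (2 * sqrt s * (1 + 2 * sqrt s) powr b) * gauss_moment b) ^ DIM('a)"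
    unfolding h_def prod_constant by (intro power_mono nn_integral_gauss_weight_le[OF s b]) simp
  finally show ?thesis .
qed

definition bessel_integrand :: "real \<Rightarrow> real \<Rightarrow> real \<Rightarrow> real" where
  "bessel_integrand d s r = exp (- s) * (4 * pi * s) powr (- d / 2) * exp (- r\<^sup>2 / (4 * s))"

lemma bessel_integrand_nonneg: "0 \<le> bessel_integrand d s r"
  unfolding bessel_integrand_def by simp

lemma Bker_eq_integral:
  "Bker (z :: real^'n) = (\<integral>s. indicator {0<..} s * bessel_integrand CARD('n) s (norm z) \<partial>lborel)"
  unfolding Bker_def bessel_integrand_def set_lebesgue_integral_def by simp

lemma Bker_measurable [measurable]: "(Bker :: real^'n \<Rightarrow> real) \<in> borel_measurable borel"
  unfolding Bker_eq_integral bessel_integrand_def by measurable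

lemma Bker_nonneg: "0 \<le> Bker z"
  unfolding Bker_eq_integral by (intro integral_nonneg_AE) (auto simp: bessel_integrand_nonneg)

lemma Bker_eq_enn2real:
  "Bker (z :: real^'n)
    = enn2real (\<integral>\<^sup>+s. ennreal (indicator {0<..} s * bessel_integrand CARD('n) s (norm z)) \<partial>lborel)"
  unfolding Bker_eq_integral
  by (rule integral_eq_nn_integral) (auto simp: bessel_integrand_def)

lemma ennreal_Bker_le:
  "ennreal (Bker (z :: real^'n))
    \<le> (\<integral>\<^sup>+s. ennreal (indicator {0<..} s * bessel_integrand CARD('n) s (norm z)) \<partial>lborel)"
  unfolding Bker_eq_enn2real by (cases "(\<integral>\<^sup>+s. ennreal (indicator {0<..} s * bessel_integrand CARD('n) s (norm z)) \<partial>lborel)") auto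

lemma bessel_integrand_gauss_bound_le:
  fixes s b :: real
  assumes s: "0 < s" and b: "0 \<le> b"
  shows "exp (- s) * (4 * pi * s) powr (- real D / 2) * (2 * sqrt s * (1 + 2 * sqrt s) powr b) ^ D
    \<le> pi powr (- real D / 2) * exp (- s) * (2 + s) powr (b * D)"
proof -
  have "0 < 1 + 2 * sqrt s" using s by (simp add: add_pos_nonneg)
  then have "0 < (1 + 2 * sqrt s) powr b" by simp
  from powr_realpow[OF this, of D]
  have "(2 * sqrt s * (1 + 2 * sqrt s) powr b) ^ D = (2 * sqrt s) ^ D * (1 + 2 * sqrt s) powr (b * D)"
    by (simp add: power_mult_distrib powr_powr)
  then have "exp (- s) * (4 * pi * s) powr (- real D / 2) * (2 * sqrt s * (1 + 2 * sqrt s) powr b) ^ D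
      = exp (- s) * ((4 * pi * s) powr (- real D / 2) * (2 * sqrt s) ^ D) * (1 + 2 * sqrt s) powr (b * D)"
    by (simp only: mult.assoc)
  also have "\<dots> = pi powr (- real D / 2) * exp (- s) * (1 + 2 * sqrt s) powr (b * D)"
    unfolding heat_kernel_scaling[OF s] by (simp only: mult_ac)
  also have "\<dots> \<le> pi powr (- real D / 2) * exp (- s) * (2 + s) powr (b * D)"
  proof -
    have "2 * sqrt s \<le> 1 + s"
      using zero_le_power2[of "sqrt s - 1"] s by (simp add: power2_diff)
    then show ?thesis using s b by (intro mult_left_mono powr_mono2) auto
  qed
  finally show ?thesis .
qed

lemma nn_integral_bessel_integrand_weight_le:
  fixes s b :: real
  assumes s: "0 < s" and b: "0 \<le> b"
  shows "(\<integral>\<^sup>+z. ennreal (bessel_integrand DIM('a) s (norm z) * (1 + norm z) powr b) \<partial>(lborel :: 'a::euclidean_space measure))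
    \<le> ennreal (pi powr (- real DIM('a) / 2) * exp (- s) * (2 + s) powr (b * DIM('a))) * gauss_moment b ^ DIM('a)"
proof -
  let ?D = "DIM('a)"
  define q where "q = 2 * sqrt s * (1 + 2 * sqrt s) powr b"
  have q: "0 \<le> q" unfolding q_def using s by simp
  have "(\<integral>\<^sup>+z. ennreal (bessel_integrand ?D s (norm z) * (1 + norm z) powr b) \<partial>(lborel :: 'a measure))
      = ennreal (exp (- s) * (4 * pi * s) powr (- real ?D / 2))
        * (\<integral>\<^sup>+z. ennreal (exp (- (norm z)\<^sup>2 / (4 * s)) * (1 + norm z) powr b) \<partial>(lborel :: 'a measure))"
    unfolding bessel_integrand_def
    by (subst nn_integral_cmult[symmetric]) (auto simp: ennreal_mult[symmetric] mult.assoc)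
  also have "\<dots> \<le> ennreal (exp (- s) * (4 * pi * s) powr (- real ?D / 2)) * (ennreal q * gauss_moment b) ^ ?D"
    unfolding q_def by (intro mult_left_mono nn_integral_gauss_weight_euclidean_le s b) simp
  also have "\<dots> = ennreal (exp (- s) * (4 * pi * s) powr (- real ?D / 2) * q ^ ?D) * gauss_moment b ^ ?D"
    using q by (simp add: power_mult_distrib ennreal_power ennreal_mult mult.assoc)
  also have "\<dots> \<le> ennreal (pi powr (- real ?D / 2) * exp (- s) * (2 + s) powr (b * ?D)) * gauss_moment b ^ ?D"
    unfolding q_def using bessel_integrand_gauss_bound_le[OF s b, of ?D]
    by (intro mult_right_mono ennreal_leI) auto
  finally show ?thesis .
qed

text \<open>By Tonelli the weighted integral of B is an s-integral of e^(-s) (4 pi s)^(-n/2) times a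
  Gaussian moment, which grows only polynomially in s.\<close>

lemma nn_integral_Bker_weight_finite:
  fixes b :: real
  assumes b: "0 \<le> b"
  shows "(\<integral>\<^sup>+z. ennreal (Bker (z :: real^'n) * (1 + norm z) powr b) \<partial>lborel) < \<infinity>"
proof -
  let ?D = "CARD('n)"
  define F where "F s z = ennreal (indicator {0<..} s * bessel_integrand ?D s (norm z) * (1 + norm z) powr b)"
    for s :: real and z :: "real^'n"
  have [measurable]: "case_prod F \<in> borel_measurable (lborel \<Otimes>\<^sub>M lborel)"
    unfolding F_def bessel_integrand_def by measurable
  have "(\<integral>\<^sup>+z. ennreal (Bker (z :: real^'n) * (1 + norm z) powr b) \<partial>lborel)
      \<le> (\<integral>\<^sup>+z. \<integral>\<^sup>+s. F s z \<partial>lborel \<partial>lborel)"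
  proof (intro nn_integral_mono)
    fix z :: "real^'n"
    have "ennreal (Bker z * (1 + norm z) powr b) = ennreal (Bker z) * ennreal ((1 + norm z) powr b)"
      by (simp add: ennreal_mult Bker_nonneg)
    also have "\<dots> \<le> (\<integral>\<^sup>+s. ennreal (indicator {0<..} s * bessel_integrand ?D s (norm z)) \<partial>lborel)
        * ennreal ((1 + norm z) powr b)"
      by (intro mult_right_mono ennreal_Bker_le) simp
    also have "\<dots> = (\<integral>\<^sup>+s. F s z \<partial>lborel)"
      unfolding F_def
      by (subst nn_integral_multc[symmetric]) (auto simp: ennreal_mult[symmetric] bessel_integrand_def)
    finally show "ennreal (Bker z * (1 + norm z) powr b) \<le> (\<integral>\<^sup>+s. F s z \<partial>lborel)" .
  qed
  also have "\<dots> = (\<integral>\<^sup>+s. \<integral>\<^sup>+z. F s z \<partial>lborel \<partial>lborel)"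
    by (rule lborel_pair.Fubini') measurable
  also have "\<dots> \<le> (\<integral>\<^sup>+s. ennreal (pi powr (- real ?D / 2))
      * (ennreal (exp (- s) * (2 + s) powr (b * ?D)) * indicator {0..} s) * gauss_moment b ^ ?D \<partial>lborel)"
  proof (intro nn_integral_mono)
    fix s :: real
    show "(\<integral>\<^sup>+z. F s z \<partial>lborel) \<le> ennreal (pi powr (- real ?D / 2))
      * (ennreal (exp (- s) * (2 + s) powr (b * ?D)) * indicator {0..} s) * gauss_moment b ^ ?D"
    proof (cases "0 < s")
      case True
      then have "(\<integral>\<^sup>+z. F s z \<partial>lborel)
          = (\<integral>\<^sup>+z. ennreal (bessel_integrand DIM(real^'n) s (norm (z :: real^'n)) * (1 + norm z) powr b) \<partial>lborel)"
        unfolding F_def by simp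
      also have "\<dots> \<le> ennreal (pi powr (- real ?D / 2) * exp (- s) * (2 + s) powr (b * ?D)) * gauss_moment b ^ ?D"
        using nn_integral_bessel_integrand_weight_le[OF True b, where 'a = "real^'n"] by simp
      finally show ?thesis
        using True by (simp add: ennreal_mult mult.assoc)
    qed (simp add: F_def)
  qed
  also have "\<dots> = ennreal (pi powr (- real ?D / 2))
      * (\<integral>\<^sup>+s. ennreal (exp (- s) * (2 + s) powr (b * ?D)) * indicator {0..} s \<partial>lborel) * gauss_moment b ^ ?D"
    by (simp add: nn_integral_cmult nn_integral_multc)
  also have "\<dots> < \<infinity>"
    using nn_integral_exp_neg_mult_powr_finite[of "b * ?D"] gauss_moment_finite[OF b] b
    by (simp add: ennreal_mult_less_top power_less_top_ennreal)
  finally show ?thesis .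
qed

lemma integrable_Bker_weight:
  fixes x :: "real^'n" and b :: real
  assumes b: "0 \<le> b"
  shows "integrable lborel (\<lambda>y. Bker (x - y) * (1 + norm y) powr b)"
proof (rule integrableI_nonneg)
  show "AE y in lborel. 0 \<le> Bker (x - y) * (1 + norm y) powr b"
    by (simp add: Bker_nonneg)
  have "(\<integral>\<^sup>+y. ennreal (Bker (x - y) * (1 + norm y) powr b) \<partial>lborel)
      \<le> (\<integral>\<^sup>+y. ennreal ((1 + norm x) powr b) * ennreal (Bker (x - y) * (1 + norm (x - y)) powr b) \<partial>lborel)"
  proof (intro nn_integral_mono)
    fix y :: "real^'n"
    have "1 + norm y \<le> (1 + norm x) * (1 + norm (x - y))"
      using norm_triangle_ineq3[of x y] by (simp add: algebra_simps) (smt (verit) mult_nonneg_nonneg norm_ge_zero)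
    then have "(1 + norm y) powr b \<le> (1 + norm x) powr b * (1 + norm (x - y)) powr b"
      using b by (auto simp: powr_mult[symmetric] intro: powr_mono2)
    then show "ennreal (Bker (x - y) * (1 + norm y) powr b)
        \<le> ennreal ((1 + norm x) powr b) * ennreal (Bker (x - y) * (1 + norm (x - y)) powr b)"
      by (simp add: ennreal_mult[symmetric] Bker_nonneg mult_left_mono mult.left_commute ennreal_leI)
  qed
  also have "\<dots> = ennreal ((1 + norm x) powr b) * (\<integral>\<^sup>+z. ennreal (Bker (z :: real^'n) * (1 + norm z) powr b) \<partial>lborel)"
    by (simp add: nn_integral_cmult nn_integral_lborel_reflect[where f = "\<lambda>z. ennreal (Bker z * (1 + norm z) powr b)"])
  also have "\<dots> < \<infinity>"
    using nn_integral_Bker_weight_finite[OF b, where 'n = 'n] by (simp add: ennreal_mult_less_top)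
  finally show "(\<integral>\<^sup>+y. ennreal (Bker (x - y) * (1 + norm y) powr b) \<partial>lborel) < \<infinity>" .
qed measurable

lemma integrable_Bker_mult:
  fixes x :: "real^'n" and \<phi> :: "real^'n \<Rightarrow> real"
  assumes b: "0 \<le> b" and [measurable]: "\<phi> \<in> borel_measurable lborel"
    and bound: "\<And>y. \<bar>\<phi> y\<bar> \<le> M * (1 + norm y) powr b"
  shows "integrable lborel (\<lambda>y. Bker (x - y) * \<phi> y)"
proof (rule Bochner_Integration.integrable_bound)
  show "integrable lborel (\<lambda>y. M * (Bker (x - y) * (1 + norm y) powr b))"
    by (intro integrable_mult_right integrable_Bker_weight b)
  show "AE y in lborel. norm (Bker (x - y) * \<phi> y) \<le> norm (M * (Bker (x - y) * (1 + norm y) powr b))"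
  proof (intro AE_I2)
    fix y :: "real^'n"
    have "\<bar>Bker (x - y) * \<phi> y\<bar> \<le> Bker (x - y) * (M * (1 + norm y) powr b)"
      by (simp add: abs_mult Bker_nonneg mult_left_mono bound)
    then show "norm (Bker (x - y) * \<phi> y) \<le> norm (M * (Bker (x - y) * (1 + norm y) powr b))"
      by (simp add: mult_ac)
  qed
qed measurable

lemma bessel_integrand_le_exp:
  assumes r: "0 < r" and d: "0 \<le> d"
  obtains K where "0 < K" "\<And>s. 0 < s \<Longrightarrow> bessel_integrand d s r \<le> K * exp (- s)"
proof -
  obtain C where C: "0 < C" "\<And>y. 0 \<le> y \<Longrightarrow> y powr (d / 2) \<le> C * exp (r\<^sup>2 / 4 * y)"
    using powr_le_const_mult_exp[of "d / 2" "r\<^sup>2 / 4"] r d by auto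
  show ?thesis
  proof (rule that[of "(4 * pi) powr (- d / 2) * C"])
    show "0 < (4 * pi) powr (- d / 2) * C" using C(1) by simp
    fix s :: real assume s: "0 < s"
    have "s powr (- d / 2) = (1 / s) powr (d / 2)"
      using s by (simp add: powr_minus_divide powr_divide)
    also have "\<dots> \<le> C * exp (r\<^sup>2 / 4 * (1 / s))"
      using C(2)[of "1 / s"] s by simp
    finally have "s powr (- d / 2) * exp (- r\<^sup>2 / (4 * s)) \<le> C * (exp (r\<^sup>2 / 4 * (1 / s)) * exp (- r\<^sup>2 / (4 * s)))"
      by (simp add: mult_right_mono mult.assoc)
    also have "\<dots> = C"
      by (simp add: exp_minus_inverse)
    finally have "s powr (- d / 2) * exp (- r\<^sup>2 / (4 * s)) \<le> C" .
    then have "exp (- s) * (4 * pi) powr (- d / 2) * (s powr (- d / 2) * exp (- r\<^sup>2 / (4 * s)))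
        \<le> exp (- s) * (4 * pi) powr (- d / 2) * C"
      by (intro mult_left_mono) auto
    then show "bessel_integrand d s r \<le> (4 * pi) powr (- d / 2) * C * exp (- s)"
      unfolding bessel_integrand_def using s by (simp add: powr_mult mult_ac)
  qed
qed

lemma bessel_integrand_ge:
  assumes r: "0 < r" and d: "0 \<le> d" and s: "(r + 1) / 2 \<le> s" "s \<le> (r + 2) / 2"
  shows "exp (- r - 1) * (2 * pi * (r + 2)) powr (- d / 2) \<le> bessel_integrand d s r"
proof -
  have "0 < s" using r s by simp
  have "r\<^sup>2 \<le> 2 * r * s" using s r by (simp add: power2_eq_square)
  then have "r\<^sup>2 / (4 * s) \<le> r / 2" using \<open>0 < s\<close> by (simp add: field_simps)
  moreover have "(2 * pi * (r + 2)) powr (- d / 2) \<le> (4 * pi * s) powr (- d / 2)"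
    using \<open>0 < s\<close> s d by (intro powr_mono2') auto
  moreover have "exp (- (r + 2) / 2) \<le> exp (- s)" using s by simp
  ultimately have "exp (- (r + 2) / 2) * (2 * pi * (r + 2)) powr (- d / 2) * exp (- r / 2) \<le> bessel_integrand d s r"
    unfolding bessel_integrand_def by (intro mult_mono) auto
  moreover have "exp (- (r + 2) / 2) * exp (- r / 2) = exp (- r - 1)"
    by (simp add: mult_exp_exp field_simps)
  ultimately show ?thesis
    by (metis mult.commute mult.left_commute)
qed

lemma nn_integral_bessel_integrand_finite:
  assumes r: "0 < r" and d: "0 \<le> d"
  shows "(\<integral>\<^sup>+s. ennreal (indicator {0<..} s * bessel_integrand d s r) \<partial>lborel) < top"
proof -
  obtain K where K: "0 < K" "\<And>s. 0 < s \<Longrightarrow> bessel_integrand d s r \<le> K * exp (- s)"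
    using bessel_integrand_le_exp[OF r d] by blast
  have "(\<integral>\<^sup>+s. ennreal (indicator {0<..} s * bessel_integrand d s r) \<partial>lborel)
      \<le> (\<integral>\<^sup>+s. ennreal K * (ennreal (exp (- s)) * indicator {0..} s) \<partial>lborel)"
  proof (intro nn_integral_mono)
    fix s :: real
    show "ennreal (indicator {0<..} s * bessel_integrand d s r) \<le> ennreal K * (ennreal (exp (- s)) * indicator {0..} s)"
    proof (cases "0 < s")
      case True
      then show ?thesis
        using K by (simp add: ennreal_mult[symmetric] ennreal_leI)
    qed simp
  qed
  also have "\<dots> = ennreal K"
    using nn_integral_exp_neg_Ici by (simp add: nn_integral_cmult)
  finally show ?thesis using order.strict_trans1 by fastforce
qed

lemma Bker_ge:
  fixes z :: "real^'n"
  assumes "z \<noteq> 0"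
  shows "exp (- norm z - 1) * (2 * pi * (norm z + 2)) powr (- real CARD('n) / 2) / 2 \<le> Bker z"
proof -
  define r where "r = norm z"
  define d where "d = real CARD('n)"
  define L where "L = exp (- r - 1) * (2 * pi * (r + 2)) powr (- d / 2)"
  define I where "I = (\<integral>\<^sup>+s. ennreal (indicator {0<..} s * bessel_integrand d s r) \<partial>lborel)"
  have r: "0 < r" using assms unfolding r_def by simp
  have "0 \<le> L" unfolding L_def by simp
  have d: "0 \<le> d" unfolding d_def by simp
  have "I < top"
    unfolding I_def by (rule nn_integral_bessel_integrand_finite[OF r d])
  have "ennreal (L / 2) = (\<integral>\<^sup>+s. ennreal L * indicator {(r + 1) / 2..(r + 2) / 2} s \<partial>lborel)"
    using r \<open>0 \<le> L\<close>
    by (simp add: nn_integral_cmult_indicator ennreal_divide_numeral[symmetric] divide_ennreal_def field_simps)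
  also have "\<dots> \<le> I"
    unfolding I_def L_def using r d bessel_integrand_ge[OF r d]
    by (intro nn_integral_mono) (auto simp: indicator_def intro: ennreal_leI)
  finally have "L / 2 \<le> enn2real I"
    using enn2real_mono[OF _ \<open>I < top\<close>] \<open>0 \<le> L\<close> by fastforce
  also have "enn2real I = Bker z"
    unfolding Bker_eq_enn2real I_def r_def d_def ..
  finally show ?thesis unfolding L_def r_def d_def .
qed

lemma Bker_ge_exp_neg:
  assumes \<delta>: "1 < \<delta>"
  obtains \<kappa> where "0 < \<kappa>" "\<And>z::real^'n. z \<noteq> 0 \<Longrightarrow> \<kappa> * exp (- \<delta> * norm z) \<le> Bker z"
proof -
  define d where "d = real CARD('n)"
  obtain C where C: "0 < C" "\<And>y. 0 \<le> y \<Longrightarrow> y powr (d / 2) \<le> C * exp ((\<delta> - 1) / (2 * pi) * y)"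
    using powr_le_const_mult_exp[of "d / 2" "(\<delta> - 1) / (2 * pi)"] \<delta> unfolding d_def by auto
  show ?thesis
  proof (rule that[of "exp (1 - 2 * \<delta>) / (2 * C)"])
    show "0 < exp (1 - 2 * \<delta>) / (2 * C)" using C by simp
    fix z :: "real^'n" assume z: "z \<noteq> 0"
    define r where "r = norm z"
    define y where "y = 2 * pi * (r + 2)"
    have y: "0 < y" unfolding y_def r_def by (simp add: add_nonneg_pos)
    have "y powr (d / 2) \<le> C * exp ((\<delta> - 1) * (r + 2))"
      using C(2)[of y] y unfolding y_def by simp
    then have y_powr: "1 / (C * exp ((\<delta> - 1) * (r + 2))) \<le> y powr (- d / 2)"
      using y C(1) by (simp add: powr_minus_divide divide_left_mono)
    have "(1 - 2 * \<delta>) + - \<delta> * r = (- r - 1) - (\<delta> - 1) * (r + 2)"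
      by (simp add: algebra_simps)
    then have exps: "exp (1 - 2 * \<delta>) * exp (- \<delta> * r) = exp (- r - 1) / exp ((\<delta> - 1) * (r + 2))"
      by (simp only: mult_exp_exp exp_diff[symmetric])
    have "exp (1 - 2 * \<delta>) / (2 * C) * exp (- \<delta> * r) = (exp (1 - 2 * \<delta>) * exp (- \<delta> * r)) / (2 * C)"
      by simp
    also have "\<dots> = exp (- r - 1) * (1 / (C * exp ((\<delta> - 1) * (r + 2)))) / 2"
      unfolding exps by (simp add: field_simps)
    also have "\<dots> \<le> exp (- r - 1) * y powr (- d / 2) / 2"
      using y_powr by (intro divide_right_mono mult_left_mono) auto
    also have "\<dots> \<le> Bker z"
      using Bker_ge[OF z] unfolding y_def r_def d_def by simp
    finally show "exp (1 - 2 * \<delta>) / (2 * C) * exp (- \<delta> * norm z) \<le> Bker z"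
      unfolding r_def .
  qed
qed

lemma BC_growth:
  fixes \<phi> :: "real^'n \<Rightarrow> real"
  assumes "\<phi> \<in> BC a"
  obtains M where "\<And>y. \<bar>\<phi> y\<bar> \<le> M * (1 + norm y) powr \<bar>a\<bar>"
proof -
  from assms obtain C R where cont: "continuous_on UNIV \<phi>"
    and far: "\<And>y. R \<le> norm y \<Longrightarrow> \<bar>\<phi> y\<bar> \<le> C * norm y powr a"
    unfolding BC_def by auto
  define R' where "R' = max R 1"
  have "bounded (\<phi> ` cball 0 R')"
    by (intro compact_imp_bounded compact_continuous_image continuous_on_subset[OF cont]) auto
  then obtain B where near: "\<And>y. y \<in> cball 0 R' \<Longrightarrow> \<bar>\<phi> y\<bar> \<le> B"
    unfolding bounded_iff by fastforce
  show ?thesis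
  proof (rule that[of "\<bar>B\<bar> + \<bar>C\<bar>"])
    fix y :: "real^'n"
    have weight: "1 \<le> (1 + norm y) powr \<bar>a\<bar>" by (intro ge_one_powr_ge_zero) auto
    show "\<bar>\<phi> y\<bar> \<le> (\<bar>B\<bar> + \<bar>C\<bar>) * (1 + norm y) powr \<bar>a\<bar>"
    proof (cases "norm y \<le> R'")
      case True
      then have "\<bar>\<phi> y\<bar> \<le> \<bar>B\<bar> * 1" using near by fastforce
      also have "\<dots> \<le> (\<bar>B\<bar> + \<bar>C\<bar>) * (1 + norm y) powr \<bar>a\<bar>"
        using weight by (intro mult_mono) auto
      finally show ?thesis .
    next
      case False
      then have y: "1 \<le> norm y" "R \<le> norm y" unfolding R'_def by auto
      have "norm y powr a \<le> norm y powr \<bar>a\<bar>"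
        using y by (intro powr_mono) auto
      also have "\<dots> \<le> (1 + norm y) powr \<bar>a\<bar>"
        by (intro powr_mono2) auto
      finally have "\<bar>C\<bar> * norm y powr a \<le> \<bar>C\<bar> * (1 + norm y) powr \<bar>a\<bar>"
        by (intro mult_left_mono) auto
      moreover have "\<bar>\<phi> y\<bar> \<le> \<bar>C\<bar> * norm y powr a"
        using far[OF y(2)] by (smt (verit) mult_right_mono powr_ge_zero)
      ultimately have "\<bar>\<phi> y\<bar> \<le> \<bar>C\<bar> * (1 + norm y) powr \<bar>a\<bar>"
        by linarith
      also have "\<dots> \<le> (\<bar>B\<bar> + \<bar>C\<bar>) * (1 + norm y) powr \<bar>a\<bar>"
        by (intro mult_right_mono) auto
      finally show ?thesis .
    qed
  qed
qed

lemma integrable_Bker_mult_BC: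
  fixes \<phi> :: "real^'n \<Rightarrow> real"
  assumes "\<phi> \<in> BC a"
  shows "integrable lborel (\<lambda>y. Bker (x - y) * \<phi> y)"
proof -
  obtain M where "\<And>y. \<bar>\<phi> y\<bar> \<le> M * (1 + norm y) powr \<bar>a\<bar>"
    using BC_growth[OF assms] by blast
  moreover have "\<phi> \<in> borel_measurable lborel"
    using assms unfolding BC_def by (simp add: borel_measurable_continuous_onI)
  ultimately show ?thesis
    by (intro integrable_Bker_mult[of "\<bar>a\<bar>"]) auto
qed

lemma Bop_nonneg: "(\<And>y. 0 \<le> \<phi> y) \<Longrightarrow> 0 \<le> Bop \<phi> x"
  unfolding Bop_def by (intro integral_nonneg_AE) (auto simp: Bker_nonneg)

lemma Bop_ge_on_ball:
  fixes \<phi> :: "real^'n \<Rightarrow> real" and x x0 :: "real^'n"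
  assumes \<kappa>: "\<And>z::real^'n. z \<noteq> 0 \<Longrightarrow> \<kappa> * exp (- \<delta> * norm z) \<le> Bker z" "0 \<le> \<kappa>"
    and "0 \<le> \<delta>" and "0 \<le> m"
    and ball: "\<And>y. y \<in> ball x0 r \<Longrightarrow> m \<le> \<phi> y"
    and nonneg: "\<And>y. 0 \<le> \<phi> y"
    and int: "integrable lborel (\<lambda>y. Bker (x - y) * \<phi> y)"
  shows "m * \<kappa> * measure lborel (ball x0 r) * exp (- \<delta> * (norm x0 + r)) * exp (- \<delta> * norm x) \<le> Bop \<phi> x"
proof -
  define K where "K = m * \<kappa> * exp (- \<delta> * (norm x + norm x0 + r))"
  have "(\<integral>y. indicator (ball x0 r) y * K \<partial>lborel) \<le> (\<integral>y. Bker (x - y) * \<phi> y \<partial>lborel)"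
  proof (rule integral_mono_AE)
    show "integrable lborel (\<lambda>y. indicator (ball x0 r) y * K)"
      using emeasure_lborel_ball_finite[of x0 r]
      by (intro integrable_mult_left integrable_real_indicator) (auto simp: less_top)
    show "AE y in lborel. indicator (ball x0 r) y * K \<le> Bker (x - y) * \<phi> y"
      using AE_lborel_singleton[of x]
    proof eventually_elim
      case (elim y)
      show ?case
      proof (cases "y \<in> ball x0 r")
        case True
        have "norm (x - y) \<le> norm x + norm x0 + r"
          using True norm_triangle_ineq4[of x y] norm_triangle_ineq2[of y x0]
          by (simp add: dist_norm norm_minus_commute)
        then have "\<kappa> * exp (- \<delta> * (norm x + norm x0 + r)) \<le> \<kappa> * exp (- \<delta> * norm (x - y))"
          using assms(3) \<kappa>(2) by (intro mult_left_mono) (auto intro: mult_left_mono)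
        also have "\<dots> \<le> Bker (x - y)"
          using \<kappa>(1)[of "x - y"] elim by simp
        finally have "m * (\<kappa> * exp (- \<delta> * (norm x + norm x0 + r))) \<le> \<phi> y * Bker (x - y)"
          using ball[OF True] assms(4) \<kappa>(2) by (intro mult_mono) (auto simp: Bker_nonneg)
        then show ?thesis using True unfolding K_def by (simp add: mult_ac)
      qed (simp add: nonneg Bker_nonneg)
    qed
  qed (rule int)
  then have "measure lborel (ball x0 r) * K \<le> Bop \<phi> x"
    unfolding Bop_def by simp
  moreover have "exp (- \<delta> * (norm x + norm x0 + r)) = exp (- \<delta> * (norm x0 + r)) * exp (- \<delta> * norm x)"
    by (simp add: mult_exp_exp algebra_simps)
  ultimately show ?thesis
    unfolding K_def by (simp add: mult_ac)
qed

lemma continuous_on_Bop_Z: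
  fixes \<mu> :: "real^'n \<Rightarrow> real \<Rightarrow> real"
  assumes Z: "\<mu> \<in> Z T a"
  shows "continuous_on (Tset T) (\<lambda>\<tau>. Bop (\<lambda>y. \<mu> y \<tau>) x)"
  unfolding continuous_on_iff
proof (intro ballI allI impI)
  fix t e :: real assume t: "t \<in> Tset T" and e: "0 < e"
  have weight: "integrable lborel (\<lambda>y. Bker (x - y) * (1 + norm y) powr a)"
    by (rule integrable_Bker_mult[of "\<bar>a\<bar>" _ 1]) (auto intro: powr_mono)
  define W where "W = (\<integral>y. Bker (x - y) * (1 + norm y) powr a \<partial>lborel)"
  have "0 \<le> W" unfolding W_def by (intro integral_nonneg_AE) (auto simp: Bker_nonneg)
  define \<epsilon> where "\<epsilon> = e / (W + 1)"
  have "0 < \<epsilon>" unfolding \<epsilon>_def using e \<open>0 \<le> W\<close> by simp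
  with Z t obtain d where "0 < d"
    and close: "\<And>s y. s \<in> Tset T \<Longrightarrow> \<bar>s - t\<bar> < d \<Longrightarrow> \<bar>\<mu> y s - \<mu> y t\<bar> \<le> \<epsilon> * (1 + norm y) powr a"
    unfolding Z_def by blast
  have BC: "integrable lborel (\<lambda>y. Bker (x - y) * \<mu> y s)" if "s \<in> Tset T" for s
    using Z that unfolding Z_def by (intro integrable_Bker_mult_BC[of _ a]) auto
  show "\<exists>d>0. \<forall>s\<in>Tset T. dist s t < d \<longrightarrow> dist (Bop (\<lambda>y. \<mu> y s) x) (Bop (\<lambda>y. \<mu> y t) x) < e"
  proof (intro exI[of _ d] conjI ballI impI \<open>0 < d\<close>)
    fix s assume s: "s \<in> Tset T" and "dist s t < d"
    have "\<bar>Bop (\<lambda>y. \<mu> y s) x - Bop (\<lambda>y. \<mu> y t) x\<bar>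
        = \<bar>\<integral>y. Bker (x - y) * (\<mu> y s - \<mu> y t) \<partial>lborel\<bar>"
      unfolding Bop_def using BC[OF s] BC[OF t] by (simp add: right_diff_distrib)
    also have "\<dots> \<le> (\<integral>y. \<epsilon> * (Bker (x - y) * (1 + norm y) powr a) \<partial>lborel)"
    proof (rule integral_abs_bound_integral)
      show "integrable lborel (\<lambda>y. Bker (x - y) * (\<mu> y s - \<mu> y t))"
        using BC[OF s] BC[OF t] by (simp add: right_diff_distrib)
      show "integrable lborel (\<lambda>y. \<epsilon> * (Bker (x - y) * (1 + norm y) powr a))"
        using weight by simp
      fix y :: "real^'n"
      have "Bker (x - y) * \<bar>\<mu> y s - \<mu> y t\<bar> \<le> Bker (x - y) * (\<epsilon> * (1 + norm y) powr a)"
        using close[OF s, of y] \<open>dist s t < d\<close>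
        by (intro mult_left_mono) (auto simp: Bker_nonneg dist_real_def)
      then show "\<bar>Bker (x - y) * (\<mu> y s - \<mu> y t)\<bar> \<le> \<epsilon> * (Bker (x - y) * (1 + norm y) powr a)"
        by (simp add: abs_mult Bker_nonneg mult.left_commute)
    qed
    also have "\<dots> = \<epsilon> * W" unfolding W_def by simp
    also have "\<dots> < e" unfolding \<epsilon>_def using e \<open>0 \<le> W\<close> by (simp add: field_simps)
    finally show "dist (Bop (\<lambda>y. \<mu> y s) x) (Bop (\<lambda>y. \<mu> y t) x) < e"
      by (simp add: dist_real_def)
  qed
qed

lemma set_integral_nonneg:
  fixes f :: "'a \<Rightarrow> real"
  shows "(\<And>t. t \<in> A \<Longrightarrow> 0 \<le> f t) \<Longrightarrow> 0 \<le> (LINT t:A|M. f t)"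
  unfolding set_lebesgue_integral_def by (intro integral_nonneg_AE) (auto simp: indicator_def)

lemma atLeastAtMost_subset_Tset: "t \<in> Tset T \<Longrightarrow> {0..t} \<subseteq> Tset T"
  unfolding Tset_def by (auto intro: le_less_trans[of _ "ereal t"])

definition linear_supersol :: "(real^'n \<Rightarrow> real) \<Rightarrow> ereal \<Rightarrow> real \<Rightarrow> (real^'n \<Rightarrow> real \<Rightarrow> real) \<Rightarrow> bool" where
  "linear_supersol u0 T a \<mu> \<longleftrightarrow> \<mu> \<in> Z T a \<and> (\<forall>x. \<forall>t\<in>Tset T. 0 \<le> \<mu> x t) \<and>
     (\<forall>x. \<forall>t\<in>Tset T. u0 x + (LINT \<tau>:{0..t}|lborel. Bop (\<lambda>y. \<mu> y \<tau>) x) \<le> \<mu> x t)"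

lemma linear_supersol_ge_initial:
  assumes "linear_supersol u0 T a \<mu>" "t \<in> Tset T"
  shows "u0 x \<le> \<mu> x t"
proof -
  have "0 \<le> (LINT \<tau>:{0..t}|lborel. Bop (\<lambda>y. \<mu> y \<tau>) x)"
    using assms atLeastAtMost_subset_Tset[OF assms(2)]
    by (intro set_integral_nonneg Bop_nonneg) (auto simp: linear_supersol_def)
  moreover have "u0 x + (LINT \<tau>:{0..t}|lborel. Bop (\<lambda>y. \<mu> y \<tau>) x) \<le> \<mu> x t"
    using assms unfolding linear_supersol_def by blast
  ultimately show ?thesis by linarith
qed

lemma linear_supersol_Bop_ge:
  fixes u0 :: "real^'n \<Rightarrow> real"
  assumes \<mu>: "linear_supersol u0 T a \<mu>" "\<tau> \<in> Tset T"
    and \<kappa>: "\<And>z::real^'n. z \<noteq> 0 \<Longrightarrow> \<kappa> * exp (- \<delta> * norm z) \<le> Bker z" "0 \<le> \<kappa>"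
    and "0 \<le> \<delta>" "0 \<le> m" and ball: "\<And>y. y \<in> ball x0 r \<Longrightarrow> m \<le> u0 y"
  shows "m * \<kappa> * measure lborel (ball x0 r) * exp (- \<delta> * (norm x0 + r)) * exp (- \<delta> * norm x)
    \<le> Bop (\<lambda>y. \<mu> y \<tau>) x"
proof (rule Bop_ge_on_ball[OF \<kappa> \<open>0 \<le> \<delta>\<close> \<open>0 \<le> m\<close>])
  show "m \<le> \<mu> y \<tau>" if "y \<in> ball x0 r" for y
    using ball[OF that] linear_supersol_ge_initial[OF \<mu>] by (rule order.trans)
  show "0 \<le> \<mu> y \<tau>" for y
    using \<mu> unfolding linear_supersol_def by blast
  show "integrable lborel (\<lambda>y. Bker (x - y) * \<mu> y \<tau>)"
    using \<mu> unfolding linear_supersol_def Z_def by (intro integrable_Bker_mult_BC[of _ a]) auto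
qed

lemma linear_supersol_Bop_time_integral_ge:
  fixes u0 :: "real^'n \<Rightarrow> real"
  assumes u0: "continuous_on UNIV u0" "\<And>x. 0 \<le> u0 x" "u0 x0 \<noteq> 0"
    and \<delta>: "1 < \<delta>" and t0: "0 < t0" "ereal t0 < T"
  obtains C0 where "0 < C0"
    "\<And>a \<mu> x. linear_supersol u0 T a \<mu> \<Longrightarrow>
       C0 * exp (- \<delta> * norm x) \<le> (LINT \<tau>:{0..t0}|lborel. Bop (\<lambda>y. \<mu> y \<tau>) x)"
proof -
  define \<eta> where "\<eta> = u0 x0"
  have "0 < \<eta>" using u0(2,3) unfolding \<eta>_def by (simp add: order_less_le)
  then obtain r where "0 < r" and near: "\<And>y. dist y x0 < r \<Longrightarrow> dist (u0 y) \<eta> < \<eta> / 2"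
    using u0(1) unfolding continuous_on_iff \<eta>_def by (metis UNIV_I half_gt_zero)
  have ball: "\<eta> / 2 \<le> u0 y" if "y \<in> ball x0 r" for y
  proof -
    have "\<bar>\<eta> - u0 y\<bar> < \<eta> / 2"
      using near[of y] that by (simp add: dist_commute dist_real_def)
    then show ?thesis by linarith
  qed
  obtain \<kappa> where \<kappa>: "0 < \<kappa>" "\<And>z::real^'n. z \<noteq> 0 \<Longrightarrow> \<kappa> * exp (- \<delta> * norm z) \<le> Bker z"
    using Bker_ge_exp_neg[OF \<delta>] by blast
  define c where "c = \<eta> / 2 * \<kappa> * measure lborel (ball x0 r) * exp (- \<delta> * (norm x0 + r))"
  have "0 < c"
    unfolding c_def using \<open>0 < \<eta>\<close> \<kappa>(1) content_ball_pos[OF \<open>0 < r\<close>] by simp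
  have t0T: "t0 \<in> Tset T" using t0 unfolding Tset_def by simp
  show ?thesis
  proof (rule that[of "t0 * c"])
    show "0 < t0 * c" using t0 \<open>0 < c\<close> by simp
    fix a \<mu> x assume \<mu>: "linear_supersol u0 T a \<mu>"
    have "(LINT \<tau>:{0..t0}|lborel. c * exp (- \<delta> * norm x)) \<le> (LINT \<tau>:{0..t0}|lborel. Bop (\<lambda>y. \<mu> y \<tau>) x)"
    proof (rule set_integral_mono)
      show "set_integrable lborel {0..t0} (\<lambda>\<tau>. Bop (\<lambda>y. \<mu> y \<tau>) x)"
        using \<mu> continuous_on_subset[OF continuous_on_Bop_Z atLeastAtMost_subset_Tset[OF t0T]]
        unfolding linear_supersol_def by (blast intro: borel_integrable_atLeastAtMost')
      show "c * exp (- \<delta> * norm x) \<le> Bop (\<lambda>y. \<mu> y \<tau>) x" if "\<tau> \<in> {0..t0}" for \<tau>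
        unfolding c_def using \<delta> \<kappa> \<open>0 < \<eta>\<close> ball atLeastAtMost_subset_Tset[OF t0T] that
        by (intro linear_supersol_Bop_ge[OF \<mu>]) auto
    qed (intro borel_integrable_atLeastAtMost' continuous_intros)
    then show "t0 * c * exp (- \<delta> * norm x) \<le> (LINT \<tau>:{0..t0}|lborel. Bop (\<lambda>y. \<mu> y \<tau>) x)"
      using t0 by (simp add: set_integral_const mult_ac)
  qed
qed

lemma source_integral_nonneg:
  assumes "\<And>y. 0 \<le> V y"
  shows "0 \<le> (LINT \<tau>:{0..t}|lborel. exp ((1 - p) * \<tau>) * Bop (\<lambda>y. V y * (exp \<tau> * u y \<tau>) powr p) x)"
  using assms by (intro set_integral_nonneg mult_nonneg_nonneg Bop_nonneg) auto

lemma s_supersol_imp_linear_supersol: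
  assumes u: "s_supersol p V u0 T a u" "\<And>x t. t \<in> Tset T \<Longrightarrow> 0 \<le> u x t"
    and V: "\<And>x. 0 \<le> V x"
  shows "linear_supersol u0 T a (\<lambda>x t. exp t * u x t)"
  unfolding linear_supersol_def
proof (intro conjI allI ballI)
  show "(\<lambda>x t. exp t * u x t) \<in> Z T a"
    using u(1) unfolding s_supersol_def by blast
next
  fix x t assume "t \<in> Tset T"
  then show "0 \<le> exp t * u x t" using u(2) by simp
next
  fix x t assume t: "t \<in> Tset T"
  have "u0 x + (LINT \<tau>:{0..t}|lborel. Bop (\<lambda>y. exp \<tau> * u y \<tau>) x)
      + (LINT \<tau>:{0..t}|lborel. exp ((1 - p) * \<tau>) * Bop (\<lambda>y. V y * (exp \<tau> * u y \<tau>) powr p) x)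
      \<le> exp t * u x t"
    using u(1) t unfolding s_supersol_def by blast
  moreover have "0 \<le> (LINT \<tau>:{0..t}|lborel. exp ((1 - p) * \<tau>) * Bop (\<lambda>y. V y * (exp \<tau> * u y \<tau>) powr p) x)"
    using V by (rule source_integral_nonneg)
  ultimately show "u0 x + (LINT \<tau>:{0..t}|lborel. Bop (\<lambda>y. exp \<tau> * u y \<tau>) x) \<le> exp t * u x t"
    by linarith
qed

theorem mainTheorem13:
  fixes T :: ereal and u0 :: "real^'n \<Rightarrow> real"
  assumes "0 < T"
    and "continuous_on UNIV u0" and "\<forall>x. 0 \<le> u0 x" and "\<exists>x. u0 x \<noteq> 0"
  shows "\<forall>\<delta>>1. \<forall>t0. 0 < t0 \<and> ereal t0 < T \<longrightarrow>
    (\<exists>C0>0.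
      (\<forall>a \<mu>. \<mu> \<in> Z T a \<and> (\<forall>x. \<forall>t\<in>Tset T. 0 \<le> \<mu> x t) \<and>
          (\<forall>x. \<forall>t\<in>Tset T. \<mu> x t \<ge> u0 x + (LINT \<tau>:{0..t}|lborel. Bop (\<lambda>y. \<mu> y \<tau>) x))
        \<longrightarrow> (\<forall>x. (LINT \<tau>:{0..t0}|lborel. Bop (\<lambda>y. \<mu> y \<tau>) x) \<ge> C0 * exp (- \<delta> * norm x)))
      \<and>
      (\<forall>p V a u. 0 < p \<and> p < 1 \<and> continuous_on UNIV V \<and> (\<forall>x. 0 \<le> V x) \<and>
          (\<forall>x. \<forall>t\<in>Tset T. 0 \<le> u x t) \<and> s_supersol p V u0 T a u
        \<longrightarrow> (\<forall>x.
              exp t0 * u x t0 \<ge> u0 x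
                + (LINT \<tau>:{0..t0}|lborel. Bop (\<lambda>y. exp \<tau> * u y \<tau>) x)
                + (LINT \<tau>:{0..t0}|lborel. exp ((1 - p) * \<tau>) *
                     Bop (\<lambda>y. V y * (exp \<tau> * u y \<tau>) powr p) x)
            \<and> u0 x
                + (LINT \<tau>:{0..t0}|lborel. Bop (\<lambda>y. exp \<tau> * u y \<tau>) x)
                + (LINT \<tau>:{0..t0}|lborel. exp ((1 - p) * \<tau>) *
                     Bop (\<lambda>y. V y * (exp \<tau> * u y \<tau>) powr p) x)
              \<ge> C0 * exp (- \<delta> * norm x))))"
proof (intro allI impI, goal_cases)
  case (1 \<delta> t0)
  from assms(4) obtain x0 where "u0 x0 \<noteq> 0" by blast
  with assms(2,3) 1 obtain C0 where "0 < C0" and lower: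
    "\<And>a \<mu> x. linear_supersol u0 T a \<mu> \<Longrightarrow>
       C0 * exp (- \<delta> * norm x) \<le> (LINT \<tau>:{0..t0}|lborel. Bop (\<lambda>y. \<mu> y \<tau>) x)"
    using linear_supersol_Bop_time_integral_ge[of u0 x0 \<delta> t0 T] by blast
  have t0: "t0 \<in> Tset T" using 1 unfolding Tset_def by simp
  show ?case
  proof (intro exI[of _ C0] conjI allI impI, goal_cases)
    case 1
    show ?case using \<open>0 < C0\<close> .
  next
    case (2 a \<mu> x)
    then show ?case using lower unfolding linear_supersol_def by blast
  next
    case (3 p V a u x)
    then show ?case using t0 unfolding s_supersol_def by blast
  next
    case (4 p V a u x)
    then have "linear_supersol u0 T a (\<lambda>x t. exp t * u x t)"
      by (intro s_supersol_imp_linear_supersol) auto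
    then have "C0 * exp (- \<delta> * norm x) \<le> (LINT \<tau>:{0..t0}|lborel. Bop (\<lambda>y. exp \<tau> * u y \<tau>) x)"
      by (rule lower)
    moreover have "0 \<le> (LINT \<tau>:{0..t0}|lborel. exp ((1 - p) * \<tau>) * Bop (\<lambda>y. V y * (exp \<tau> * u y \<tau>) powr p) x)"
      using 4 by (intro source_integral_nonneg) auto
    moreover have "0 \<le> u0 x" using assms(3) by blast
    ultimately show ?case by linarith
  qed
qed

end
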